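(* Let $K$ be an idempotent ordered TGP-$\omega$-valuation monoid, $AP$ a finite set of atomic propositions, $k\in K\setminus\{\mathbf{0},\mathbf{1}\}$ and $\varphi\in k\text{-}\vee\text{-}t\text{-}RULTL(K,AP)$. Then $\|\varphi\|:(\mathcal{P}(AP))^{\omega}\to K$ is $k$-safe.
   Context: Idempotent ordered TGP-$\omega$-valuation monoid $(K,+,\cdot,Val^{\omega},\mathbf{0},\mathbf{1})$: complete monoid $(K,+,\mathbf{0})$ (infinitary sums over arbitrary index sets with the usual axioms), idempotent, totally ordered by the natural order $k\le k'$ iff $k'=k'+k$; $Val^{\omega}$ maps finitely-valued sequences in $K$ to $K$; $\cdot$ has zero $\mathbf{0}$ and unit $\mathbf{1}$; $Val^{\omega}=\mathbf{0}$ if some entry is $\mathbf{0}$; $Val^{\omega}(\mathbf{1}^{\omega})=\mathbf{1}$; $\sum_I(k\cdot\mathbf{1})=k\cdot\sum_I\mathbf{1}$; $Val^{\omega}$ distributes over finite sums of families each entirely in $L\setminus\{\mathbf{0},\mathbf{1}\}$ or entirely in $\{\mathbf{0},\mathbf{1}\}$ ($L\subseteq K$ finite); $Val^{\omega}(\mathbf{1},k_1,\dots)=Val^{\omega}(k_1,\dots)$, $Val^{\omega}(k,\mathbf{1},\dots)=k$, $k\le\mathbf{1}$, $k_i\ge k\ \forall i\Rightarrow Val^{\omega}((k_i)_i)\ge k$. Weighted LTL over $AP$ and $K$: $\varphi::=k\mid a\mid\neg a\mid\varphi\vee\varphi\mid\varphi\wedge\varphi\mid\bigcirc\varphi\mid\varphi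 U\varphi\mid\square\varphi$, semantics: $(\|k\|,w)=k$; $(\|a\|,w)=\mathbf{1}$ if $a\in w(0)$ else $\mathbf{0}$; $\neg a$ dually; $\vee\mapsto+$, $\wedge\mapsto\cdot$; $(\|\bigcirc\varphi\|,w)=(\|\varphi\|,w_{\ge1})$; $(\|\varphi U\psi\|,w)=\sum_{i\ge0}Val^{\omega}((\|\varphi\|,w_{\ge0}),\dots,(\|\varphi\|,w_{\ge i-1}),(\|\psi\|,w_{\ge i}),\mathbf{1},\mathbf{1},\dots)$; $(\|\square\varphi\|,w)=Val^{\omega}(((\|\varphi\|,w_{\ge i}))_{i\ge0})$. $true:=\mathbf{1}$, $\varphi\tilde U\psi:=\square\varphi\vee(\varphi U\psi)$. $sbLTL(K,AP)$: $\varphi::=true\mid a\mid\neg a\mid\varphi\vee\varphi\mid\varphi\wedge\varphi\mid\bigcirc\varphi\mid\varphi\tilde U\varphi\mid\square\varphi$. $L_k=\{k'\in K\mid k'\ge k\}$. $k\text{-}stLTL(K,AP)$: formulas $\bigvee_{1\le i\le n}(k_i\wedge\varphi_i)$, $k_i\in L_k\setminus\{\mathbf{0},\mathbf{1}\}$, $\varphi_i\in sbLTL(K,AP)$. $k\text{-}\vee\text{-}t\text{-}RULTL(K,AP)$ is the least class of formulas such that: (1) every $k'\in L_k$ is in it; (2) $sbLTL(K,AP)\subseteq$ it; (3) $k\text{-}stLTL(K,AP)\subseteq$ it; (4) closed under $\bigcirc$; (5) if $\varphi,\psi\in k\text{-}stLTL(K,AP)$ then $\varphi\vee\psi$ is in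 it; (6) if $\varphi\in sbLTL(K,AP)$ and $\psi\in k\text{-}stLTL(K,AP)$, or $\psi=\xi\tilde U\lambda$, or $\psi=\square\xi$ with $\xi,\lambda\in k\text{-}stLTL(K,AP)$, then $\varphi\wedge\psi,\psi\wedge\varphi$ are in it; (7) if $\varphi,\psi\in k\text{-}stLTL(K,AP)$ then $\varphi\tilde U\psi$ is in it; (8) if $\varphi\in k\text{-}stLTL(K,AP)$ then $\square\varphi$ is in it. A series $s$ is $k$-safe if for every $w$: whenever for every $i>0$ there is $u$ with $(s,w_{<i}u)\ge k$ ($w_{<i}$ the length-$i$ prefix), then $(s,w)\ge k$. *)

theory Defs
  imports Main
begin

text \<open>Arbitrary index sets are modelled by subsets of
  the (continuum-sized) type nat => nat; every index set the definitions need
  (subsets of nat, embedded as constant functions, and products of countably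
  many finite subsets of nat) lives there.\<close>
type_synonym idx = "nat \<Rightarrow> nat"

record 'k tgp =
  zer :: 'k
  one :: 'k
  pl  :: "'k \<Rightarrow> 'k \<Rightarrow> 'k"
  tm  :: "'k \<Rightarrow> 'k \<Rightarrow> 'k"
  Val :: "(nat \<Rightarrow> 'k) \<Rightarrow> 'k"
  Sum :: "(idx \<Rightarrow> 'k) \<Rightarrow> idx set \<Rightarrow> 'k"

definition nle :: "'k tgp \<Rightarrow> 'k \<Rightarrow> 'k \<Rightarrow> bool" where
  "nle K a b \<longleftrightarrow> b = pl K b a"

definition sumN :: "'k tgp \<Rightarrow> (nat \<Rightarrow> 'k) \<Rightarrow> nat set \<Rightarrow> 'k" where
  "sumN K g I = Sum K (\<lambda>f. g (f 0)) ((\<lambda>n (_::nat). n) ` I)"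

definition fin_valued :: "(nat \<Rightarrow> 'k) \<Rightarrow> bool" where
  "fin_valued s \<longleftrightarrow> finite (range s)"

definition idem_ordered_tgp :: "'k tgp \<Rightarrow> bool" where
  "idem_ordered_tgp K \<longleftrightarrow>
    \<comment> \<open>complete (commutative) monoid\<close>
    (\<forall>a b c. pl K (pl K a b) c = pl K a (pl K b c)) \<and>
    (\<forall>a b. pl K a b = pl K b a) \<and>
    (\<forall>a. pl K (zer K) a = a) \<and>
    (\<forall>f g I. (\<forall>i\<in>I. f i = g i) \<longrightarrow> Sum K f I = Sum K g I) \<and>
    (\<forall>f. Sum K f {} = zer K) \<and>
    (\<forall>f j. Sum K f {j} = f j) \<and>
    (\<forall>f j l. j \<noteq> l \<longrightarrow> Sum K f {j, l} = pl K (f j) (f l)) \<and>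
    (\<forall>f I J P. (\<Union>j\<in>J. P j) = I \<longrightarrow>
        (\<forall>j\<in>J. \<forall>j'\<in>J. j \<noteq> j' \<longrightarrow> P j \<inter> P j' = {}) \<longrightarrow>
        Sum K f I = Sum K (\<lambda>j. Sum K f (P j)) J) \<and>
    \<comment> \<open>idempotent\<close>
    (\<forall>a. pl K a a = a) \<and>
    \<comment> \<open>totally ordered by the natural order\<close>
    (\<forall>a b. nle K a b \<or> nle K b a) \<and>
    \<comment> \<open>zero and unit of the product\<close>
    (\<forall>a. tm K (zer K) a = zer K \<and> tm K a (zer K) = zer K) \<and>
    (\<forall>a. tm K (one K) a = a \<and> tm K a (one K) = a) \<and>
    \<comment> \<open>Val on finitely valued sequences\<close>
    (\<forall>s. fin_valued s \<longrightarrow> (\<exists>i. s i = zer K) \<longrightarrow> Val K s = zer K) \<and>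
    Val K (\<lambda>_. one K) = one K \<and>
    (\<forall>a I. Sum K (\<lambda>_. tm K a (one K)) I = tm K a (Sum K (\<lambda>_. one K) I)) \<and>
    \<comment> \<open>distributivity of Val over finite sums\<close>
    (\<forall>L (I :: nat \<Rightarrow> nat set) (d :: nat \<Rightarrow> nat \<Rightarrow> 'k). finite L \<longrightarrow>
        (\<forall>j. finite (I j)) \<longrightarrow>
        (\<forall>j. (\<forall>i\<in>I j. d j i \<in> L - {zer K, one K}) \<or> (\<forall>i\<in>I j. d j i \<in> {zer K, one K})) \<longrightarrow>
        Val K (\<lambda>j. sumN K (d j) (I j)) =
        Sum K (\<lambda>f. Val K (\<lambda>j. d j (f j))) {f. \<forall>j. f j \<in> I j}) \<and>
    (\<forall>s. fin_valued s \<longrightarrow> s 0 = one K \<longrightarrow> Val K s = Val K (\<lambda>i. s (Suc i))) \<and>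
    (\<forall>a. Val K (\<lambda>i. if i = 0 then a else one K) = a) \<and>
    (\<forall>a. nle K a (one K)) \<and>
    (\<forall>s a. fin_valued s \<longrightarrow> (\<forall>i. nle K a (s i)) \<longrightarrow> nle K a (Val K s))"

datatype ('k, 'a) wltl =
    Const 'k
  | Atom 'a
  | NAtom 'a
  | Or "('k, 'a) wltl" "('k, 'a) wltl"
  | And "('k, 'a) wltl" "('k, 'a) wltl"
  | Next "('k, 'a) wltl"
  | Until "('k, 'a) wltl" "('k, 'a) wltl"
  | Box "('k, 'a) wltl"

primrec atoms :: "('k, 'a) wltl \<Rightarrow> 'a set" where
  "atoms (Const c) = {}"
| "atoms (Atom a) = {a}"
| "atoms (NAtom a) = {a}"
| "atoms (Or p q) = atoms p \<union> atoms q"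
| "atoms (And p q) = atoms p \<union> atoms q"
| "atoms (Next p) = atoms p"
| "atoms (Until p q) = atoms p \<union> atoms q"
| "atoms (Box p) = atoms p"

definition suffix :: "nat \<Rightarrow> (nat \<Rightarrow> 'a set) \<Rightarrow> nat \<Rightarrow> 'a set" where
  "suffix i w = (\<lambda>j. w (i + j))"

primrec sem :: "'k tgp \<Rightarrow> ('k, 'a) wltl \<Rightarrow> (nat \<Rightarrow> 'a set) \<Rightarrow> 'k" where
  "sem K (Const c) w = c"
| "sem K (Atom a) w = (if a \<in> w 0 then one K else zer K)"
| "sem K (NAtom a) w = (if a \<notin> w 0 then one K else zer K)"
| "sem K (Or p q) w = pl K (sem K p w) (sem K q w)"
| "sem K (And p q) w = tm K (sem K p w) (sem K q w)"
| "sem K (Next p) w = sem K p (suffix 1 w)"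
| "sem K (Until p q) w =
     sumN K (\<lambda>i. Val K (\<lambda>j. if j < i then sem K p (suffix j w)
                             else if j = i then sem K q (suffix i w) else one K)) UNIV"
| "sem K (Box p) w = Val K (\<lambda>i. sem K p (suffix i w))"

definition wtrue :: "'k tgp \<Rightarrow> ('k, 'a) wltl" where
  "wtrue K = Const (one K)"

definition WUntil :: "('k, 'a) wltl \<Rightarrow> ('k, 'a) wltl \<Rightarrow> ('k, 'a) wltl" where
  "WUntil p q = Or (Box p) (Until p q)"

inductive_set sbLTL :: "'k tgp \<Rightarrow> ('k, 'a) wltl set" for K where
  "wtrue K \<in> sbLTL K"
| "Atom a \<in> sbLTL K"
| "NAtom a \<in> sbLTL K"
| "p \<in> sbLTL K \<Longrightarrow> q \<in> sbLTL K \<Longrightarrow> Or p q \<in> sbLTL K"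
| "p \<in> sbLTL K \<Longrightarrow> q \<in> sbLTL K \<Longrightarrow> And p q \<in> sbLTL K"
| "p \<in> sbLTL K \<Longrightarrow> Next p \<in> sbLTL K"
| "p \<in> sbLTL K \<Longrightarrow> q \<in> sbLTL K \<Longrightarrow> WUntil p q \<in> sbLTL K"
| "p \<in> sbLTL K \<Longrightarrow> Box p \<in> sbLTL K"

definition Lk :: "'k tgp \<Rightarrow> 'k \<Rightarrow> 'k set" where
  "Lk K k = {k'. nle K k k'}"

fun BigOr :: "('k, 'a) wltl list \<Rightarrow> ('k, 'a) wltl" where
  "BigOr [] = Const undefined"
| "BigOr [p] = p"
| "BigOr (p # ps) = Or p (BigOr ps)"

definition stLTL :: "'k tgp \<Rightarrow> 'k \<Rightarrow> ('k, 'a) wltl set" where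
  "stLTL K k = {BigOr (map (\<lambda>(c, p). And (Const c) p) xs) | xs.
      xs \<noteq> [] \<and> (\<forall>(c, p) \<in> set xs. c \<in> Lk K k - {zer K, one K} \<and> p \<in> sbLTL K)}"

inductive_set RULTL :: "'k tgp \<Rightarrow> 'k \<Rightarrow> ('k, 'a) wltl set" for K k where
  "c \<in> Lk K k \<Longrightarrow> Const c \<in> RULTL K k"
| "p \<in> sbLTL K \<Longrightarrow> p \<in> RULTL K k"
| "p \<in> stLTL K k \<Longrightarrow> p \<in> RULTL K k"
| "p \<in> RULTL K k \<Longrightarrow> Next p \<in> RULTL K k"
| "p \<in> stLTL K k \<Longrightarrow> q \<in> stLTL K k \<Longrightarrow> Or p q \<in> RULTL K k"
| "p \<in> sbLTL K \<Longrightarrow>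
     q \<in> stLTL K k \<or> (\<exists>x y. x \<in> stLTL K k \<and> y \<in> stLTL K k \<and> q = WUntil x y)
       \<or> (\<exists>x. x \<in> stLTL K k \<and> q = Box x) \<Longrightarrow>
     And p q \<in> RULTL K k"
| "p \<in> sbLTL K \<Longrightarrow>
     q \<in> stLTL K k \<or> (\<exists>x y. x \<in> stLTL K k \<and> y \<in> stLTL K k \<and> q = WUntil x y)
       \<or> (\<exists>x. x \<in> stLTL K k \<and> q = Box x) \<Longrightarrow>
     And q p \<in> RULTL K k"
| "p \<in> stLTL K k \<Longrightarrow> q \<in> stLTL K k \<Longrightarrow> WUntil p q \<in> RULTL K k"
| "p \<in> stLTL K k \<Longrightarrow> Box p \<in> RULTL K k"

definition conc :: "nat \<Rightarrow> (nat \<Rightarrow> 'a set) \<Rightarrow> (nat \<Rightarrow> 'a set) \<Rightarrow> nat \<Rightarrow> 'a set" where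
  "conc i w u = (\<lambda>j. if j < i then w j else u (j - i))"

definition k_safe :: "'k tgp \<Rightarrow> 'a set \<Rightarrow> 'k \<Rightarrow> ((nat \<Rightarrow> 'a set) \<Rightarrow> 'k) \<Rightarrow> bool" where
  "k_safe K AP k s \<longleftrightarrow>
    (\<forall>w. (\<forall>j. w j \<subseteq> AP) \<longrightarrow>
      (\<forall>i>0. \<exists>u. (\<forall>j. u j \<subseteq> AP) \<and> nle K k (s (conc i w u))) \<longrightarrow>
      nle K k (s w))"

end

theory Submission
  imports Defs
begin

text \<open>Call a set of words over AP a safety set if it contains every word all of whose finite
  prefixes extend, over AP, to words of the set; k-safety of a series says exactly that its
  k-cut \<open>{w. k \<le> s w}\<close> is a safety set. Safety sets contain all sets determined by the first
  letter and are closed under shifts, arbitrary intersections and finite unions (if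
  infinitely many prefixes of w extend into S then all do), hence also under the weak-until
  combination of two sets.

  In an idempotent totally ordered monoid a sum dominates each summand and vanishes iff all
  summands do, while Val vanishes as soon as one entry does and dominates every common
  lower bound of its entries. Hence formulas of sbLTL take only the values 0 and 1, formulas of k-stLTL only 0
  and values above k, and for such dichotomous arguments the k-cut of a disjunction,
  conjunction, \<open>\<box>\<close> or weak until is the corresponding Boolean combination of the supports of
  the arguments. An induction over the fragment then shows that every k-cut is a safety set.\<close>

definition extends_into :: "'a set \<Rightarrow> (nat \<Rightarrow> 'a set) set \<Rightarrow> nat \<Rightarrow> (nat \<Rightarrow> 'a set) \<Rightarrow> bool" where
  "extends_into AP S i w \<longleftrightarrow> (\<exists>u. (\<forall>j. u j \<subseteq> AP) \<and> conc i w u \<in> S)"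

definition safety :: "'a set \<Rightarrow> (nat \<Rightarrow> 'a set) set \<Rightarrow> bool" where
  "safety AP S \<longleftrightarrow>
    (\<forall>w. (\<forall>j. w j \<subseteq> AP) \<longrightarrow> (\<forall>i>0. extends_into AP S i w) \<longrightarrow> w \<in> S)"

lemma k_safe_iff_safety: "k_safe K AP k f \<longleftrightarrow> safety AP {w. nle K k (f w)}"
  by (simp add: k_safe_def safety_def extends_into_def)

lemma safetyD:
  "safety AP S \<Longrightarrow> \<forall>j. w j \<subseteq> AP \<Longrightarrow> (\<And>i. i > 0 \<Longrightarrow> extends_into AP S i w) \<Longrightarrow> w \<in> S"
  by (simp add: safety_def)

lemma extends_into_mono: "S \<subseteq> T \<Longrightarrow> extends_into AP S i w \<Longrightarrow> extends_into AP T i w"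
  by (auto simp: extends_into_def)

lemma extends_into_Un:
  "extends_into AP (S \<union> T) i w \<longleftrightarrow> extends_into AP S i w \<or> extends_into AP T i w"
  by (auto simp: extends_into_def)

lemma extends_into_shorter:
  assumes "i \<le> i'" and "\<forall>j. w j \<subseteq> AP" and "extends_into AP S i' w"
  shows "extends_into AP S i w"
proof -
  obtain u where u: "\<forall>j. u j \<subseteq> AP" "conc i' w u \<in> S"
    using assms(3) by (auto simp: extends_into_def)
  let ?v = "\<lambda>j. conc i' w u (i + j)"
  have "conc i w ?v = conc i' w u" using assms(1) by (auto simp: conc_def fun_eq_iff)
  moreover have "\<forall>j. ?v j \<subseteq> AP" using assms(2) u(1) by (simp add: conc_def)
  ultimately show ?thesis using u(2) unfolding extends_into_def by metis
qed

lemma safety_Un: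
  assumes S: "safety AP S" and T: "safety AP T"
  shows "safety AP (S \<union> T)"
  unfolding safety_def
proof (intro allI impI)
  fix w assume w: "\<forall>j. w j \<subseteq> AP" and ext: "\<forall>i>0. extends_into AP (S \<union> T) i w"
  show "w \<in> S \<union> T"
  proof (cases "\<forall>i. \<exists>i'\<ge>i. extends_into AP S i' w")
    case True
    then have "w \<in> S" using extends_into_shorter w by (blast intro: safetyD[OF S w])
    then show ?thesis by simp
  next
    case False
    then obtain a where a: "\<forall>i'\<ge>a. \<not> extends_into AP S i' w" by blast
    have "extends_into AP T i w" if "i > 0" for i
    proof -
      have "extends_into AP T (max a i) w"
        using ext[rule_format, of "max a i"] a that by (auto simp: extends_into_Un)
      then show ?thesis using extends_into_shorter[OF max.cobounded2 w] by blast
    qed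
    then have "w \<in> T" by (rule safetyD[OF T w])
    then show ?thesis by simp
  qed
qed

lemma safety_Inter:
  assumes "\<And>S. S \<in> \<S> \<Longrightarrow> safety AP S"
  shows "safety AP (\<Inter>\<S>)"
  unfolding safety_def
proof (intro allI impI InterI)
  fix w S assume "\<forall>j. w j \<subseteq> AP" "\<forall>i>0. extends_into AP (\<Inter>\<S>) i w" "S \<in> \<S>"
  then show "w \<in> S" by (meson Inter_lower assms extends_into_mono safetyD)
qed

lemma safety_INT: "(\<And>x. x \<in> I \<Longrightarrow> safety AP (F x)) \<Longrightarrow> safety AP (\<Inter>x\<in>I. F x)"
  by (rule safety_Inter) blast

lemma safety_Int: "safety AP S \<Longrightarrow> safety AP T \<Longrightarrow> safety AP (S \<inter> T)"
  using safety_Inter[of "{S, T}"] by auto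

lemma safety_empty: "safety AP {}"
  by (auto simp: safety_def extends_into_def)

lemma safety_UNIV: "safety AP UNIV"
  by (simp add: safety_def)

lemma safety_UN:
  "finite I \<Longrightarrow> (\<And>x. x \<in> I \<Longrightarrow> safety AP (F x)) \<Longrightarrow> safety AP (\<Union>x\<in>I. F x)"
  by (induction I rule: finite_induct) (simp_all add: safety_empty safety_Un)

lemma suffix_conc: "suffix n (conc (i + n) w u) = conc i (suffix n w) u"
  by (auto simp: suffix_def conc_def fun_eq_iff)

lemma safety_suffix_vimage:
  assumes "safety AP S"
  shows "safety AP {w. suffix n w \<in> S}"
  unfolding safety_def
proof (intro allI impI)
  fix w assume w: "\<forall>j. w j \<subseteq> AP" and ext: "\<forall>i>0. extends_into AP {w. suffix n w \<in> S} i w"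
  have "extends_into AP S i (suffix n w)" if "i > 0" for i
    using ext[rule_format, of "i + n"] that by (simp add: extends_into_def suffix_conc)
  moreover have "\<forall>j. suffix n w j \<subseteq> AP" using w by (simp add: suffix_def)
  ultimately show "w \<in> {w. suffix n w \<in> S}" using safetyD[OF assms] by blast
qed

lemma safety_first_letter: "safety AP {w. P (w 0)}"
proof -
  have "P (w 0)" if "extends_into AP {w. P (w 0)} 1 w" for w :: "nat \<Rightarrow> 'a set"
    using that by (auto simp: extends_into_def conc_def)
  then show ?thesis by (auto simp: safety_def)
qed

lemma safety_weak_until:
  assumes X: "safety AP X" and Y: "safety AP Y"
  shows "safety AP {w. (\<forall>i. suffix i w \<in> X) \<or> (\<exists>i. suffix i w \<in> Y \<and> (\<forall>j<i. suffix j w \<in> X))}"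
    (is "safety AP ?U")
proof -
  define A where "A n = (\<Inter>i\<le>n. {w. suffix i w \<in> X}) \<union>
    (\<Union>i\<le>n. {w. suffix i w \<in> Y} \<inter> (\<Inter>j<i. {w. suffix j w \<in> X}))" for n
  have "?U = (\<Inter>n. A n)"
  proof (intro equalityI subsetI)
    fix w assume "w \<in> ?U"
    then consider "\<forall>i. suffix i w \<in> X" | i where "suffix i w \<in> Y" "\<forall>j<i. suffix j w \<in> X"
      by blast
    then show "w \<in> (\<Inter>n. A n)"
    proof cases
      case (2 i)
      have "w \<in> A n" for n
        using 2 by (cases "i \<le> n") (auto simp: A_def)
      then show ?thesis by blast
    qed (simp add: A_def)
  next
    fix w assume w: "w \<in> (\<Inter>n. A n)"
    show "w \<in> ?U"
    proof (cases "\<forall>i. suffix i w \<in> X")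
      case False
      then obtain i where "suffix i w \<notin> X" by blast
      define m where "m = (LEAST i. suffix i w \<notin> X)"
      have "suffix m w \<notin> X" unfolding m_def by (rule LeastI) fact
      moreover have "\<forall>j<m. suffix j w \<in> X" unfolding m_def using not_less_Least by blast
      moreover have "w \<in> A m" using w by blast
      ultimately show ?thesis unfolding A_def by blast
    qed simp
  qed
  moreover have "safety AP (A n)" for n
    unfolding A_def
    by (intro safety_Un safety_UN safety_Int safety_INT safety_suffix_vimage X Y finite_atMost)
  ultimately show ?thesis by (simp add: safety_INT)
qed

lemma BigOr_closed:
  assumes "xs \<noteq> []" and "\<And>p. p \<in> set xs \<Longrightarrow> P p" and "\<And>p q. P p \<Longrightarrow> P q \<Longrightarrow> P (Or p q)"
  shows "P (BigOr xs)"
  using assms by (induction xs rule: BigOr.induct) auto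

lemma fin_valued_if_range_subset: "finite V \<Longrightarrow> range s \<subseteq> V \<Longrightarrow> fin_valued s"
  unfolding fin_valued_def by (rule finite_subset)

text \<open>The axioms of \<^const>\<open>idem_ordered_tgp\<close> actually used, plus nontriviality.\<close>

locale idem_tgp =
  fixes K :: "'k tgp"
  assumes pl_assoc: "pl K (pl K a b) c = pl K a (pl K b c)"
    and pl_commute: "pl K a b = pl K b a"
    and pl_zero: "pl K (zer K) a = a"
    and pl_idem: "pl K a a = a"
    and nle_total: "nle K a b \<or> nle K b a"
    and Sum_cong: "\<And>f g I. \<forall>i\<in>I. f i = g i \<Longrightarrow> Sum K f I = Sum K g I"
    and Sum_singleton: "Sum K f {j} = f j"
    and Sum_doubleton: "\<And>f j l. j \<noteq> l \<Longrightarrow> Sum K f {j, l} = pl K (f j) (f l)"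
    and Sum_partition: "\<And>f I J P. (\<Union>j\<in>J. P j) = I \<Longrightarrow>
      \<forall>j\<in>J. \<forall>j'\<in>J. j \<noteq> j' \<longrightarrow> P j \<inter> P j' = {} \<Longrightarrow>
      Sum K f I = Sum K (\<lambda>j. Sum K f (P j)) J"
    and Sum_const_tm_one: "Sum K (\<lambda>_. tm K a (one K)) I = tm K a (Sum K (\<lambda>_. one K) I)"
    and tm_zero: "tm K (zer K) a = zer K \<and> tm K a (zer K) = zer K"
    and tm_one: "tm K (one K) a = a \<and> tm K a (one K) = a"
    and Val_zero: "\<And>s. fin_valued s \<Longrightarrow> \<exists>i. s i = zer K \<Longrightarrow> Val K s = zer K"
    and nle_one: "nle K a (one K)"
    and Val_lower_bound: "fin_valued s \<Longrightarrow> (\<And>i. nle K c (s i)) \<Longrightarrow> nle K c (Val K s)"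
    and one_neq_zero: "one K \<noteq> zer K"

lemma idem_tgpI:
  assumes "idem_ordered_tgp K" and "k \<noteq> zer K"
  shows "idem_tgp K"
proof -
  have "one K \<noteq> zer K"
  proof
    assume "one K = zer K"
    then have "k = zer K" using assms(1) unfolding idem_ordered_tgp_def by metis
    with assms(2) show False ..
  qed
  with assms(1) show ?thesis unfolding idem_ordered_tgp_def idem_tgp_def
    by (elim conjE) (intro conjI; assumption)
qed

context idem_tgp
begin

abbreviation nle_K (infix "\<preceq>" 50) where "a \<preceq> b \<equiv> nle K a b"

lemma nle_refl: "a \<preceq> a"
  by (simp add: nle_def pl_idem)

lemma nle_antisym: "a \<preceq> b \<Longrightarrow> b \<preceq> a \<Longrightarrow> a = b"
  unfolding nle_def by (metis pl_commute)

lemma nle_trans: "a \<preceq> b \<Longrightarrow> b \<preceq> c \<Longrightarrow> a \<preceq> c"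
  unfolding nle_def by (metis pl_assoc)

lemma nle_pl_left: "a \<preceq> pl K a b"
  unfolding nle_def by (metis pl_assoc pl_commute pl_idem)

lemma nle_pl_right: "b \<preceq> pl K a b"
  using nle_pl_left pl_commute by metis

lemma pl_cases: "pl K a b = a \<or> pl K a b = b"
  using nle_total[of a b] unfolding nle_def by (metis pl_commute)

lemma zero_nle: "zer K \<preceq> a"
  unfolding nle_def by (metis pl_commute pl_zero)

lemma nle_zero_iff: "a \<preceq> zer K \<longleftrightarrow> a = zer K"
  using nle_antisym zero_nle nle_refl by metis

lemma one_nle_iff: "one K \<preceq> a \<longleftrightarrow> a = one K"
  using nle_antisym nle_one nle_refl by metis

lemma pl_eq_zero_iff: "pl K a b = zer K \<longleftrightarrow> a = zer K \<and> b = zer K"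
  by (metis nle_pl_left nle_pl_right nle_zero_iff pl_zero)

lemma Sum_zero:
  assumes "\<forall>i\<in>I. f i = zer K"
  shows "Sum K f I = zer K"
proof -
  have "Sum K f I = Sum K (\<lambda>_. tm K (zer K) (one K)) I"
    using assms by (intro Sum_cong) (simp add: tm_zero)
  also have "\<dots> = tm K (zer K) (Sum K (\<lambda>_. one K) I)"
    by (rule Sum_const_tm_one)
  finally show ?thesis by (simp only: tm_zero)
qed

lemma Sum_upper:
  assumes "i \<in> I"
  shows "f i \<preceq> Sum K f I"
proof -
  obtain j0 j1 :: idx where distinct: "j0 \<noteq> j1"
    using fun_eq_iff[of "\<lambda>_. 0 :: nat" "\<lambda>_. 1"] by auto
  define P where "P j = (if j = j0 then {i} else I - {i})" for j
  have "Sum K f I = Sum K (\<lambda>j. Sum K f (P j)) {j0, j1}"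
    by (rule Sum_partition) (use assms distinct in \<open>auto simp: P_def\<close>)
  also have "\<dots> = pl K (f i) (Sum K f (I - {i}))"
    using distinct by (simp add: Sum_doubleton Sum_singleton P_def)
  finally show ?thesis by (simp add: nle_pl_left)
qed

lemma Sum_eq_zero_iff: "Sum K f I = zer K \<longleftrightarrow> (\<forall>i\<in>I. f i = zer K)"
  using Sum_zero Sum_upper nle_zero_iff by metis

definition dichotomous :: "'k \<Rightarrow> 'k \<Rightarrow> bool" where
  "dichotomous c v \<longleftrightarrow> v = zer K \<or> c \<preceq> v"

lemma dichotomous_iff_nonzero: "c \<noteq> zer K \<Longrightarrow> dichotomous c v \<Longrightarrow> c \<preceq> v \<longleftrightarrow> v \<noteq> zer K"
  unfolding dichotomous_def using nle_zero_iff by metis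

lemma dichotomous_weaken: "c' \<preceq> c \<Longrightarrow> dichotomous c v \<Longrightarrow> dichotomous c' v"
  unfolding dichotomous_def using nle_trans by metis

lemma dichotomous_one_iff: "dichotomous (one K) v \<longleftrightarrow> v = zer K \<or> v = one K"
  unfolding dichotomous_def using one_nle_iff by metis

lemma dichotomous_pl: "dichotomous c a \<Longrightarrow> dichotomous c b \<Longrightarrow> dichotomous c (pl K a b)"
  using pl_cases by metis

lemma dichotomous_tm:
  assumes "dichotomous (one K) a" and "dichotomous c b"
  shows "dichotomous c (tm K a b)" and "dichotomous c (tm K b a)"
proof -
  from assms(1) have "a = zer K \<or> a = one K" by (simp add: dichotomous_one_iff)
  with assms(2) show "dichotomous c (tm K a b)" and "dichotomous c (tm K b a)"
    by (auto simp: tm_zero tm_one dichotomous_def)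
qed

lemma Sum_dichotomous:
  assumes "\<forall>i\<in>I. dichotomous c (f i)"
  shows "dichotomous c (Sum K f I)"
proof (cases "\<forall>i\<in>I. f i = zer K")
  case True
  then show ?thesis by (simp add: Sum_zero dichotomous_def)
next
  case False
  then obtain i where "i \<in> I" "c \<preceq> f i" using assms by (auto simp: dichotomous_def)
  then show ?thesis using Sum_upper nle_trans by (metis dichotomous_def)
qed

lemma sumN_dichotomous: "\<forall>n\<in>I. dichotomous c (g n) \<Longrightarrow> dichotomous c (sumN K g I)"
  unfolding sumN_def by (rule Sum_dichotomous) auto

lemma sumN_eq_zero_iff: "sumN K g I = zer K \<longleftrightarrow> (\<forall>n\<in>I. g n = zer K)"
  unfolding sumN_def Sum_eq_zero_iff by auto

lemma Val_dichotomous: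
  assumes "fin_valued s" and "\<forall>i. dichotomous c (s i)"
  shows "dichotomous c (Val K s)"
  using assms Val_zero Val_lower_bound unfolding dichotomous_def by metis

lemma Val_eq_zero_iff:
  assumes "fin_valued s" and "\<forall>i. dichotomous c (s i)" and "c \<noteq> zer K"
  shows "Val K s = zer K \<longleftrightarrow> (\<exists>i. s i = zer K)"
  using assms Val_zero Val_lower_bound nle_zero_iff unfolding dichotomous_def by metis

definition support :: "('x \<Rightarrow> 'k) \<Rightarrow> 'x set" where
  "support f = {x. f x \<noteq> zer K}"

definition safe_dichotomous :: "'a set \<Rightarrow> 'k \<Rightarrow> ('k, 'a) wltl \<Rightarrow> bool" where
  "safe_dichotomous AP c p \<longleftrightarrow> (\<forall>w. dichotomous c (sem K p w)) \<and> safety AP (support (sem K p))"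

lemma finite_range_if_boolean:
  assumes "\<forall>x. dichotomous (one K) (f x)"
  shows "finite (range f)"
proof (rule finite_subset)
  show "range f \<subseteq> {zer K, one K}" using assms by (auto simp: dichotomous_one_iff)
qed simp

lemma finite_range_Or:
  assumes "finite (range (sem K p))" and "finite (range (sem K q))"
  shows "finite (range (sem K (Or p q)))"
proof (rule finite_subset)
  show "range (sem K (Or p q)) \<subseteq> range (sem K p) \<union> range (sem K q)"
    using pl_cases by (auto simp: image_iff)
qed (use assms in simp)

lemma dichotomous_Box:
  assumes "finite (range (sem K p))" and "\<forall>w. dichotomous c (sem K p w)"
  shows "dichotomous c (sem K (Box p) w)"
proof -
  have "fin_valued (\<lambda>i. sem K p (suffix i w))"
    using assms(1) by (rule fin_valued_if_range_subset) auto
  then show ?thesis using assms(2) by (simp add: Val_dichotomous)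
qed

lemma Box_eq_zero_iff:
  assumes "c \<noteq> zer K" and "finite (range (sem K p))" and "\<forall>w. dichotomous c (sem K p w)"
  shows "sem K (Box p) w = zer K \<longleftrightarrow> (\<exists>i. sem K p (suffix i w) = zer K)"
proof -
  have "fin_valued (\<lambda>i. sem K p (suffix i w))"
    using assms(2) by (rule fin_valued_if_range_subset) auto
  with assms(1,3) show ?thesis by (simp add: Val_eq_zero_iff[where c = c])
qed

definition until_seq :: "('k, 'a) wltl \<Rightarrow> ('k, 'a) wltl \<Rightarrow> (nat \<Rightarrow> 'a set) \<Rightarrow> nat \<Rightarrow> nat \<Rightarrow> 'k"
  where "until_seq p q w i j =
    (if j < i then sem K p (suffix j w) else if j = i then sem K q (suffix i w) else one K)"

lemma sem_Until_eq: "sem K (Until p q) w = sumN K (\<lambda>i. Val K (until_seq p q w i)) UNIV"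
  unfolding until_seq_def[abs_def] by simp

lemma fin_valued_until_seq:
  "finite (range (sem K p)) \<Longrightarrow> finite (range (sem K q)) \<Longrightarrow> fin_valued (until_seq p q w i)"
  by (intro fin_valued_if_range_subset[of "range (sem K p) \<union> range (sem K q) \<union> {one K}"])
    (auto simp: until_seq_def)

lemma dichotomous_until_seq:
  "\<forall>w. dichotomous c (sem K p w) \<Longrightarrow> \<forall>w. dichotomous c (sem K q w) \<Longrightarrow>
    dichotomous c (until_seq p q w i j)"
  using nle_one by (auto simp: until_seq_def dichotomous_def)

lemma until_seq_nonzero_iff:
  "(\<forall>j. until_seq p q w i j \<noteq> zer K) \<longleftrightarrow>
    sem K q (suffix i w) \<noteq> zer K \<and> (\<forall>j<i. sem K p (suffix j w) \<noteq> zer K)"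
  using one_neq_zero by (auto simp: until_seq_def)

lemma dichotomous_Until:
  assumes "finite (range (sem K p))" and "finite (range (sem K q))"
    and "\<forall>w. dichotomous c (sem K p w)" and "\<forall>w. dichotomous c (sem K q w)"
  shows "dichotomous c (sem K (Until p q) w)"
  unfolding sem_Until_eq
  using assms by (simp add: sumN_dichotomous Val_dichotomous fin_valued_until_seq dichotomous_until_seq)

lemma Until_neq_zero_iff:
  assumes "c \<noteq> zer K" and "finite (range (sem K p))" and "finite (range (sem K q))"
    and "\<forall>w. dichotomous c (sem K p w)" and "\<forall>w. dichotomous c (sem K q w)"
  shows "sem K (Until p q) w \<noteq> zer K \<longleftrightarrow>
    (\<exists>i. sem K q (suffix i w) \<noteq> zer K \<and> (\<forall>j<i. sem K p (suffix j w) \<noteq> zer K))"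
proof -
  have "Val K (until_seq p q w i) \<noteq> zer K \<longleftrightarrow> (\<forall>j. until_seq p q w i j \<noteq> zer K)" for i
    using assms by (simp add: Val_eq_zero_iff[where c = c] fin_valued_until_seq dichotomous_until_seq)
  then show ?thesis unfolding sem_Until_eq sumN_eq_zero_iff until_seq_nonzero_iff by simp
qed

lemma safe_dichotomous_weaken:
  "c' \<preceq> c \<Longrightarrow> safe_dichotomous AP c p \<Longrightarrow> safe_dichotomous AP c' p"
  unfolding safe_dichotomous_def using dichotomous_weaken by blast

lemma safety_if_safe_dichotomous:
  assumes "c \<noteq> zer K" and "safe_dichotomous AP c p"
  shows "safety AP {w. c \<preceq> sem K p w}"
proof -
  have "{w. c \<preceq> sem K p w} = support (sem K p)"
    using assms dichotomous_iff_nonzero by (auto simp: safe_dichotomous_def support_def)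
  then show ?thesis using assms(2) by (simp add: safe_dichotomous_def)
qed

lemma safe_dichotomous_Const: "c \<noteq> zer K \<Longrightarrow> c' \<preceq> c \<Longrightarrow> safe_dichotomous AP c' (Const c)"
  by (simp add: safe_dichotomous_def dichotomous_def support_def safety_UNIV)

lemma safe_dichotomous_Or:
  assumes "safe_dichotomous AP c p" and "safe_dichotomous AP c q"
  shows "safe_dichotomous AP c (Or p q)"
proof -
  have "support (sem K (Or p q)) = support (sem K p) \<union> support (sem K q)"
    by (auto simp: support_def pl_eq_zero_iff)
  with assms show ?thesis by (simp add: safe_dichotomous_def dichotomous_pl safety_Un)
qed

lemma safe_dichotomous_And:
  assumes "safe_dichotomous AP (one K) p" and "safe_dichotomous AP c q"
  shows "safe_dichotomous AP c (And p q)" and "safe_dichotomous AP c (And q p)"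
proof -
  have "sem K p w = zer K \<or> sem K p w = one K" for w
    using assms(1) by (simp add: safe_dichotomous_def dichotomous_one_iff)
  then have "support (sem K (And p q)) = support (sem K p) \<inter> support (sem K q)"
    and "support (sem K (And q p)) = support (sem K p) \<inter> support (sem K q)"
    by (auto simp: support_def tm_zero tm_one) (metis tm_zero tm_one)+
  with assms show "safe_dichotomous AP c (And p q)" and "safe_dichotomous AP c (And q p)"
    by (simp_all add: safe_dichotomous_def dichotomous_tm safety_Int)
qed

lemma safe_dichotomous_Next: "safe_dichotomous AP c p \<Longrightarrow> safe_dichotomous AP c (Next p)"
  using safety_suffix_vimage[of AP "support (sem K p)" 1]
  by (simp add: safe_dichotomous_def support_def)

lemma safe_dichotomous_Box:
  assumes "c \<noteq> zer K" and "finite (range (sem K p))" and "safe_dichotomous AP c p"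
  shows "safe_dichotomous AP c (Box p)"
proof -
  from assms(3) have p: "\<forall>w. dichotomous c (sem K p w)" "safety AP (support (sem K p))"
    by (simp_all add: safe_dichotomous_def)
  have "support (sem K (Box p)) = (\<Inter>i. {w. suffix i w \<in> support (sem K p)})"
    using Box_eq_zero_iff[OF assms(1,2) p(1)] by (auto simp: support_def)
  moreover have "safety AP (\<Inter>i. {w. suffix i w \<in> support (sem K p)})"
    using p(2) by (intro safety_INT safety_suffix_vimage)
  ultimately show ?thesis
    using dichotomous_Box[OF assms(2) p(1)] by (simp add: safe_dichotomous_def)
qed

lemma safe_dichotomous_WUntil:
  assumes "c \<noteq> zer K" and "finite (range (sem K p))" and "finite (range (sem K q))"
    and "safe_dichotomous AP c p" and "safe_dichotomous AP c q"
  shows "safe_dichotomous AP c (WUntil p q)"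
proof -
  from assms(4,5) have p: "\<forall>w. dichotomous c (sem K p w)" "safety AP (support (sem K p))"
    and q: "\<forall>w. dichotomous c (sem K q w)" "safety AP (support (sem K q))"
    by (simp_all add: safe_dichotomous_def)
  have "support (sem K (WUntil p q)) =
    {w. (\<forall>i. suffix i w \<in> support (sem K p)) \<or>
        (\<exists>i. suffix i w \<in> support (sem K q) \<and> (\<forall>j<i. suffix j w \<in> support (sem K p)))}"
    using Box_eq_zero_iff[OF assms(1,2) p(1)] Until_neq_zero_iff[OF assms(1-3) p(1) q(1)]
    by (auto simp: WUntil_def support_def pl_eq_zero_iff simp del: sem.simps(7,8))
  moreover have "dichotomous c (sem K (WUntil p q) w)" for w
    using dichotomous_Box[OF assms(2) p(1)] dichotomous_Until[OF assms(2,3) p(1) q(1)]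
    by (simp add: WUntil_def dichotomous_pl del: sem.simps(7,8))
  ultimately show ?thesis
    using p(2) q(2) by (simp add: safe_dichotomous_def safety_weak_until)
qed

lemma sbLTL_safe_dichotomous: "p \<in> sbLTL K \<Longrightarrow> safe_dichotomous AP (one K) p"
proof (induction p rule: sbLTL.induct)
  case 1
  show ?case unfolding wtrue_def using one_neq_zero nle_refl by (rule safe_dichotomous_Const)
next
  case (2 a)
  have "support (sem K (Atom a)) = {w. a \<in> w 0}" using one_neq_zero by (auto simp: support_def)
  then show ?case
    using safety_first_letter[of AP "\<lambda>x. a \<in> x"]
    by (simp add: safe_dichotomous_def dichotomous_one_iff)
next
  case (3 a)
  have "support (sem K (NAtom a)) = {w. a \<notin> w 0}" using one_neq_zero by (auto simp: support_def)
  then show ?case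
    using safety_first_letter[of AP "\<lambda>x. a \<notin> x"]
    by (simp add: safe_dichotomous_def dichotomous_one_iff)
next
  case (4 p q)
  then show ?case by (simp add: safe_dichotomous_Or)
next
  case (5 p q)
  then show ?case by (simp add: safe_dichotomous_And)
next
  case (6 p)
  then show ?case by (simp add: safe_dichotomous_Next)
next
  case (7 p q)
  then show ?case
    using one_neq_zero finite_range_if_boolean
    by (intro safe_dichotomous_WUntil) (auto simp: safe_dichotomous_def)
next
  case (8 p)
  then show ?case
    using one_neq_zero finite_range_if_boolean
    by (intro safe_dichotomous_Box) (auto simp: safe_dichotomous_def)
qed

lemma stLTL_safe_dichotomous:
  assumes "p \<in> stLTL K k"
  shows "finite (range (sem K p)) \<and> safe_dichotomous AP k p"
proof -
  obtain xs where p: "p = BigOr (map (\<lambda>(c, q). And (Const c) q) xs)" and "xs \<noteq> []"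
    and xs: "\<forall>(c, q) \<in> set xs. c \<in> Lk K k - {zer K, one K} \<and> q \<in> sbLTL K"
    using assms unfolding stLTL_def by blast
  have "finite (range (sem K (And (Const c) q))) \<and> safe_dichotomous AP k (And (Const c) q)"
    if c: "c \<in> Lk K k - {zer K, one K}" and "q \<in> sbLTL K" for c q
  proof
    have q: "safe_dichotomous AP (one K) q" using \<open>q \<in> sbLTL K\<close> by (rule sbLTL_safe_dichotomous)
    then have "sem K (And (Const c) q) w \<in> {zer K, c}" for w
      by (cases "sem K q w = zer K") (auto simp: safe_dichotomous_def dichotomous_one_iff tm_zero tm_one)
    then have "range (sem K (And (Const c) q)) \<subseteq> {zer K, c}" by blast
    then show "finite (range (sem K (And (Const c) q)))" by (rule finite_subset) simp
    show "safe_dichotomous AP k (And (Const c) q)"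
      using c by (intro safe_dichotomous_And(2)[OF q] safe_dichotomous_Const) (auto simp: Lk_def)
  qed
  then show ?thesis unfolding p
  proof (intro BigOr_closed[where P = "\<lambda>r. finite (range (sem K r)) \<and> safe_dichotomous AP k r"])
    show "map (\<lambda>(c, q). And (Const c) q) xs \<noteq> []" using \<open>xs \<noteq> []\<close> by simp
  qed (use xs finite_range_Or safe_dichotomous_Or in auto)
qed

lemma stLTL_WUntil_safe_dichotomous:
  assumes "k \<noteq> zer K" and "p \<in> stLTL K k" and "q \<in> stLTL K k"
  shows "safe_dichotomous AP k (WUntil p q)"
  using stLTL_safe_dichotomous[OF assms(2)] stLTL_safe_dichotomous[OF assms(3)]
  by (intro safe_dichotomous_WUntil[OF assms(1)]) blast+

lemma stLTL_Box_safe_dichotomous: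
  assumes "k \<noteq> zer K" and "p \<in> stLTL K k"
  shows "safe_dichotomous AP k (Box p)"
  using stLTL_safe_dichotomous[OF assms(2)] by (intro safe_dichotomous_Box[OF assms(1)]) blast+

lemma stLTL_guard_safe_dichotomous:
  assumes "k \<noteq> zer K"
    and "q \<in> stLTL K k \<or> (\<exists>x y. x \<in> stLTL K k \<and> y \<in> stLTL K k \<and> q = WUntil x y)
      \<or> (\<exists>x. x \<in> stLTL K k \<and> q = Box x)"
  shows "safe_dichotomous AP k q"
  using assms(2)
proof (elim disjE exE conjE)
  show "q \<in> stLTL K k \<Longrightarrow> ?thesis" using stLTL_safe_dichotomous by blast
  show "x \<in> stLTL K k \<Longrightarrow> y \<in> stLTL K k \<Longrightarrow> q = WUntil x y \<Longrightarrow> ?thesis" for x y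
    using stLTL_WUntil_safe_dichotomous[OF assms(1)] by simp
  show "x \<in> stLTL K k \<Longrightarrow> q = Box x \<Longrightarrow> ?thesis" for x
    using stLTL_Box_safe_dichotomous[OF assms(1)] by simp
qed

lemma RULTL_safety:
  assumes "k \<noteq> zer K" and "p \<in> RULTL K k"
  shows "safety AP {w. k \<preceq> sem K p w}"
  using assms(2)
proof (induction p rule: RULTL.induct)
  case (1 c)
  then show ?case by (simp add: Lk_def safety_UNIV)
next
  case (2 p)
  then have "safe_dichotomous AP k p"
    using nle_one by (intro safe_dichotomous_weaken[of k "one K"] sbLTL_safe_dichotomous)
  with assms(1) show ?case by (rule safety_if_safe_dichotomous)
next
  case (3 p)
  then have "safe_dichotomous AP k p" by (simp add: stLTL_safe_dichotomous)
  with assms(1) show ?case by (rule safety_if_safe_dichotomous)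
next
  case (4 p)
  then show ?case using safety_suffix_vimage[of AP "{w. k \<preceq> sem K p w}" 1] by simp
next
  case (5 p q)
  then have "safe_dichotomous AP k (Or p q)" by (simp add: stLTL_safe_dichotomous safe_dichotomous_Or)
  with assms(1) show ?case by (rule safety_if_safe_dichotomous)
next
  case (6 p q)
  have "safe_dichotomous AP k (And p q)"
    using sbLTL_safe_dichotomous[OF 6(1)] stLTL_guard_safe_dichotomous[OF assms(1) 6(2)]
    by (rule safe_dichotomous_And(1))
  with assms(1) show ?case by (rule safety_if_safe_dichotomous)
next
  case (7 p q)
  have "safe_dichotomous AP k (And q p)"
    using sbLTL_safe_dichotomous[OF 7(1)] stLTL_guard_safe_dichotomous[OF assms(1) 7(2)]
    by (rule safe_dichotomous_And(2))
  with assms(1) show ?case by (rule safety_if_safe_dichotomous)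
next
  case (8 p q)
  have "safe_dichotomous AP k (WUntil p q)"
    using assms(1) 8 by (rule stLTL_WUntil_safe_dichotomous)
  with assms(1) show ?case by (rule safety_if_safe_dichotomous)
next
  case (9 p)
  have "safe_dichotomous AP k (Box p)"
    using assms(1) 9 by (rule stLTL_Box_safe_dichotomous)
  with assms(1) show ?case by (rule safety_if_safe_dichotomous)
qed

end

theorem corollary1:
  fixes K :: "'k tgp" and AP :: "'a set" and k :: 'k and \<phi> :: "('k, 'a) wltl"
  assumes "idem_ordered_tgp K"
    and "finite AP"
    and "k \<noteq> zer K" and "k \<noteq> one K"
    and "\<phi> \<in> RULTL K k"
    and "atoms \<phi> \<subseteq> AP"
  shows "k_safe K AP k (sem K \<phi>)"
proof -
  interpret idem_tgp K using assms(1,3) by (rule idem_tgpI)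
  show ?thesis unfolding k_safe_iff_safety using assms(3,5) by (rule RULTL_safety)
qed

end
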